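(* In the two-SP bandwidth game with minimum small-cell bandwidth constraints, suppose exactly SP 2's constraint is violated by the unconstrained equilibrium, i.e. $B_{1,S}^{\mathrm{free}}\ge B_{1,S}^0$ and $B_{2,S}^{\mathrm{free}}<B_{2,S}^0$. Then the unique constrained Nash equilibrium $(B_{1,S}^*,B_{2,S}^* )$ satisfies $B_{2,S}^*=B_{2,S}^0$; that is, it is of one of the two types: (I) $B_{1,S}^*=B_{1,S}^0,\ B_{2,S}^*=B_{2,S}^0$; or (II) $B_{1,S}^*>B_{1,S}^0,\ B_{2,S}^*=B_{2,S}^0$. In particular, an equilibrium with $B_{1,S}^*=B_{1,S}^0$ and $B_{2,S}^*>B_{2,S}^0$ is impossible.
   Context: Fixed parameters: $\alpha\in(0,1)$; densities $N_m>0$ (mobile users) and $N_f>0$ (fixed users); spectral efficiency $R_0>0$; common small-cell density $\lambda_S>1$ (macro density normalized to 1); total bandwidths $B_1,B_2>0$; regulatory lower bounds $B_{i,S}^0\in[0,B_i]$. Utility $u(r)=\frac{r^{1-\alpha}}{1-\alpha}$, $u'(r)=r^{-\alpha}$. Let $\epsilon=\lambda_S^{1/\alpha-1}$. Two-SP bandwidth game: SP $i\in\{1,2\}$ chooses small-cell bandwidth $B_{i,S}\in[B_{i,S}^0,B_i]$ and sets $B_{i,M}=B_i-B_{i,S}$. Given a profile, prices are market-clearing, mobile users use macro-cells and fixed users use small-cells, so the average rates are $R_S=\frac{\lambda_S(B_{1,S}+B_{2,S})R_0}{N_f}$ and $R_M=\frac{(B_{1,M}+B_{2,M})R_0}{N_m}$,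 and SP $i$'s payoff (revenue) is $S_i=R_0B_{i,M}R_M^{-\alpha}+R_0\lambda_SB_{i,S}R_S^{-\alpha}$ (a term with zero bandwidth is $0$). This game has a unique pure Nash equilibrium. Define $B_{i,S}^{\mathrm{free}}=\frac{\epsilon N_fB_i}{\epsilon N_f+N_m}$, the equilibrium small-cell bandwidth of SP $i$ when there are no constraints ($B_{i,S}^0=0$). *)

theory Defs
  imports Complex_Main
begin

definition rate_S :: "real \<Rightarrow> real \<Rightarrow> real \<Rightarrow> real \<Rightarrow> real \<Rightarrow> real" where
  "rate_S R0 lamS Nf b1 b2 = lamS * (b1 + b2) * R0 / Nf"

definition rate_M :: "real \<Rightarrow> real \<Rightarrow> real \<Rightarrow> real \<Rightarrow> real \<Rightarrow> real \<Rightarrow> real" where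
  "rate_M R0 Nm B1 B2 b1 b2 = ((B1 - b1) + (B2 - b2)) * R0 / Nm"

definition rev_term :: "real \<Rightarrow> real \<Rightarrow> real \<Rightarrow> real" where
  "rev_term alpha w r = (if w = 0 then 0 else w * r powr (- alpha))"

definition sp_payoff ::
  "real \<Rightarrow> real \<Rightarrow> real \<Rightarrow> real \<Rightarrow> real \<Rightarrow> real \<Rightarrow> real \<Rightarrow> real \<Rightarrow> real \<Rightarrow> real \<Rightarrow> real \<Rightarrow> real" where
  "sp_payoff alpha R0 lamS Nm Nf B1 B2 b1 b2 bM bS =
     R0 * rev_term alpha bM (rate_M R0 Nm B1 B2 b1 b2)
   + R0 * lamS * rev_term alpha bS (rate_S R0 lamS Nf b1 b2)"

definition payoff1 where
  "payoff1 alpha R0 lamS Nm Nf B1 B2 b1 b2 =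
     sp_payoff alpha R0 lamS Nm Nf B1 B2 b1 b2 (B1 - b1) b1"

definition payoff2 where
  "payoff2 alpha R0 lamS Nm Nf B1 B2 b1 b2 =
     sp_payoff alpha R0 lamS Nm Nf B1 B2 b1 b2 (B2 - b2) b2"

definition is_NE where
  "is_NE alpha R0 lamS Nm Nf B1 B2 B10 B20 b1 b2 \<longleftrightarrow>
     b1 \<in> {B10..B1} \<and> b2 \<in> {B20..B2} \<and>
     (\<forall>x\<in>{B10..B1}. payoff1 alpha R0 lamS Nm Nf B1 B2 x b2 \<le> payoff1 alpha R0 lamS Nm Nf B1 B2 b1 b2) \<and>
     (\<forall>y\<in>{B20..B2}. payoff2 alpha R0 lamS Nm Nf B1 B2 b1 y \<le> payoff2 alpha R0 lamS Nm Nf B1 B2 b1 b2)"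

definition eps :: "real \<Rightarrow> real \<Rightarrow> real" where
  "eps alpha lamS = lamS powr (1 / alpha - 1)"

definition B_free :: "real \<Rightarrow> real \<Rightarrow> real \<Rightarrow> real \<Rightarrow> real \<Rightarrow> real" where
  "B_free alpha lamS Nm Nf Bi = eps alpha lamS * Nf * Bi / (eps alpha lamS * Nf + Nm)"

end

theory Submission
  imports Defs
begin

text \<open>Suppose SP 2 puts strictly more than its lower bound B20 into small cells. Some macro-cell
  bandwidth is then in use (a first unit of it would be infinitely valuable), so both revenues are
  differentiable, and the first-order conditions of the equilibrium compare the two SPs' marginal
  revenues. If b1 = B1 they give 1 = b1/B1 \<le> b2/B2 < 1; otherwise they give b2/B2 \<le> b1/B1.
  As b2 > B20 > B_free B2, the latter gives b1 > B_free B1 \<ge> B10, so both SPs are strictly inside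
  their ranges, both first-order conditions hold with equality, and the profile is the
  unconstrained equilibrium, i.e. b2 = B_free B2: a contradiction.\<close>

lemma DERIV_nonneg_if_max_at_right_end:
  fixes f :: "real \<Rightarrow> real"
  assumes "DERIV f b :> D" "a < b" "\<forall>y\<in>{a..b}. f y \<le> f b"
  shows "0 \<le> D"
proof (rule ccontr)
  assume "\<not> 0 \<le> D"
  then obtain d where d: "0 < d" "\<forall>h>0. h < d \<longrightarrow> f b < f (b - h)"
    using DERIV_neg_dec_left[OF assms(1)] by force
  define h where "h = min d (b - a) / 2"
  have "0 < h" "h < d" "h \<le> b - a"
    using d assms(2) by (auto simp: h_def)
  then show False
    using d assms(3)[rule_format, of "b - h"] by auto
qed

lemma DERIV_nonpos_if_max_at_left_end:
  fixes f :: "real \<Rightarrow> real"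
  assumes "DERIV f b :> D" "b < c" "\<forall>y\<in>{b..c}. f y \<le> f b"
  shows "D \<le> 0"
proof (rule ccontr)
  assume "\<not> D \<le> 0"
  then obtain d where d: "0 < d" "\<forall>h>0. h < d \<longrightarrow> f b < f (b + h)"
    using DERIV_pos_inc_right[OF assms(1)] by force
  define h where "h = min d (c - b) / 2"
  have "0 < h" "h < d" "h \<le> c - b"
    using d assms(2) by (auto simp: h_def)
  then show False
    using d assms(3)[rule_format, of "b + h"] by auto
qed

lemma powr_neg_gt_if_lt_powr:
  fixes K x alpha :: real
  assumes "0 < K" "0 < alpha" "0 < x" "x < K powr (-1 / alpha)"
  shows "K < x powr (- alpha)"
proof -
  have "(K powr (-1 / alpha)) powr (- alpha) < x powr (- alpha)"
    using powr_less_mono2_neg[OF _ assms(3,4), of "- alpha"] assms(2) by simp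
  then show ?thesis
    using assms(1,2) by (simp add: powr_powr)
qed

lemma mult_powr_neg_eqD:
  fixes c r s alpha :: real
  assumes "0 < c" "0 < r" "0 < s" "alpha \<noteq> 0"
    and "c * s powr (- alpha) = r powr (- alpha)"
  shows "s = c powr (1 / alpha) * r"
proof -
  have "c powr (-1 / alpha) * s = r"
    using arg_cong[OF assms(5), of "\<lambda>t. t powr (-1 / alpha)"] assms(1-4)
    by (simp add: powr_mult powr_powr)
  moreover have "c powr (1 / alpha) * c powr (-1 / alpha) = 1"
    using assms(1) by (simp add: powr_add[symmetric])
  ultimately show ?thesis
    by (metis mult.assoc mult_1)
qed

text \<open>The derivative, divided by R0, of an SP's revenue in its own small-cell bandwidth:
  Y and X are the revenues per unit (again divided by R0) of small-cell and macro-cell bandwidth,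
  p and q the SP's shares of the total small-cell and macro-cell bandwidth.\<close>
definition marginal_revenue :: "real \<Rightarrow> real \<Rightarrow> real \<Rightarrow> real \<Rightarrow> real \<Rightarrow> real" where
  "marginal_revenue alpha Y X p q = Y * (1 - alpha * p) - X * (1 - alpha * q)"

lemma marginal_revenue_share_le:
  fixes alpha X Y p q :: real
  assumes "0 < X" "0 < alpha" "alpha < 1" "0 \<le> p" "p \<le> 1"
    and "0 \<le> marginal_revenue alpha Y X p q"
    and "marginal_revenue alpha Y X (1 - p) (1 - q) \<le> 0"
  shows "p \<le> q"
proof (rule ccontr)
  assume "\<not> p \<le> q"
  define A A' P Q where "A = 1 - alpha * (1 - p)" and "A' = 1 - alpha * (1 - q)"
    and "P = 1 - alpha * p" and "Q = 1 - alpha * q"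
  have "0 \<le> alpha * p" "alpha * p \<le> alpha"
    using assms(2,4,5) mult_left_le[of p alpha] by auto
  moreover have "alpha * q < alpha * p"
    using \<open>\<not> p \<le> q\<close> assms(2) by simp
  ultimately have "0 < A" "A' < A" "0 < P" "P < Q"
    using assms(3) unfolding A_def A'_def P_def Q_def by (simp_all add: algebra_simps)
  have "Y * A \<le> X * A'"
    using assms(7) by (simp add: marginal_revenue_def A_def A'_def)
  also have "\<dots> < X * A"
    using \<open>A' < A\<close> assms(1) by simp
  finally have "Y < X"
    using \<open>0 < A\<close> by simp
  have "X * Q \<le> Y * P"
    using assms(6) by (simp add: marginal_revenue_def P_def Q_def)
  also have "\<dots> < X * P"
    using \<open>Y < X\<close> \<open>0 < P\<close> by simp
  finally show False
    using \<open>P < Q\<close> assms(1) by simp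
qed

lemma marginal_revenue_both_zero:
  fixes alpha X Y p q :: real
  assumes "X \<noteq> 0" "alpha \<noteq> 0" "alpha \<noteq> 2"
    and "marginal_revenue alpha Y X p q = 0"
    and "marginal_revenue alpha Y X (1 - p) (1 - q) = 0"
  shows "Y = X" "p = q"
proof -
  have "(2 - alpha) * (Y - X) = 0"
    using assms(4,5) by (simp add: marginal_revenue_def algebra_simps)
  then show "Y = X"
    using assms(3) by simp
  then have "X * alpha * (q - p) = 0"
    using assms(4) by (simp add: marginal_revenue_def algebra_simps)
  then show "p = q"
    using assms(1,2) by simp
qed

lemma share_le_iff:
  fixes a b A B :: real
  assumes "0 < a + b" "0 < (A - a) + (B - b)"
  shows "b / (a + b) \<le> (B - b) / ((A - a) + (B - b)) \<longleftrightarrow> b * A \<le> B * a"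
proof -
  have "b / (a + b) \<le> (B - b) / ((A - a) + (B - b))
        \<longleftrightarrow> b * ((A - a) + (B - b)) \<le> (B - b) * (a + b)"
    using assms by (simp add: divide_le_eq le_divide_eq mult.commute mult.left_commute)
  also have "\<dots> \<longleftrightarrow> b * A \<le> B * a"
    by (simp add: algebra_simps)
  finally show ?thesis .
qed

lemma has_real_derivative_payoff2:
  fixes alpha R0 lamS Nm Nf B1 B2 b1 z :: real
  assumes "0 < Nm" "0 < Nf" "0 < R0" "0 < lamS" "0 < b1 + z" "0 < (B1 - b1) + (B2 - z)"
  shows "((\<lambda>y. payoff2 alpha R0 lamS Nm Nf B1 B2 b1 y) has_real_derivative
     R0 * marginal_revenue alpha (lamS * rate_S R0 lamS Nf b1 z powr (- alpha)) (rate_M R0 Nm B1 B2 b1 z powr (- alpha))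
        (z / (b1 + z)) ((B2 - z) / ((B1 - b1) + (B2 - z)))) (at z)"
proof -
  define m s where "m y = rate_M R0 Nm B1 B2 b1 y" and "s y = rate_S R0 lamS Nf b1 y" for y
  define X Y where "X y = m y powr (- alpha)" and "Y y = s y powr (- alpha)" for y
  have payoff: "payoff2 alpha R0 lamS Nm Nf B1 B2 b1 = (\<lambda>y. R0 * ((B2 - y) * X y) + R0 * lamS * (y * Y y))"
    by (auto simp: payoff2_def sp_payoff_def rev_term_def m_def s_def X_def Y_def)
  have dm: "(m has_real_derivative - R0 / Nm) (at z)" and ds: "(s has_real_derivative lamS * R0 / Nf) (at z)"
    unfolding m_def s_def rate_M_def rate_S_def using assms by (auto intro!: derivative_eq_intros)
  have mz: "m z = ((B1 - b1) + (B2 - z)) * (R0 / Nm)" and sz: "s z = (b1 + z) * (lamS * R0 / Nf)"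
    by (simp_all add: m_def s_def rate_M_def rate_S_def)
  have "0 < m z" "- R0 / Nm * - alpha / m z = alpha / ((B1 - b1) + (B2 - z))"
    and "0 < s z" "lamS * R0 / Nf * - alpha / s z = - alpha / (b1 + z)"
    using assms unfolding mz sz by auto
  then have "(X has_real_derivative X z * (alpha / ((B1 - b1) + (B2 - z)))) (at z)"
    and "(Y has_real_derivative Y z * (- alpha / (b1 + z))) (at z)"
    using DERIV_powr[OF dm _ DERIV_const, of "- alpha"] DERIV_powr[OF ds _ DERIV_const, of "- alpha"]
    unfolding X_def Y_def by simp_all
  then have "((\<lambda>y. R0 * ((B2 - y) * X y) + R0 * lamS * (y * Y y)) has_real_derivative
     R0 * marginal_revenue alpha (lamS * Y z) (X z) (z / (b1 + z)) ((B2 - z) / ((B1 - b1) + (B2 - z)))) (at z)"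
    by (auto intro!: derivative_eq_intros simp: marginal_revenue_def algebra_simps diff_divide_distrib)
  then show ?thesis
    by (simp add: payoff X_def Y_def m_def s_def)
qed

lemma rate_S_commute: "rate_S R0 lamS Nf b2 b1 = rate_S R0 lamS Nf b1 b2"
  by (simp add: rate_S_def algebra_simps)

lemma rate_M_commute: "rate_M R0 Nm B2 B1 b2 b1 = rate_M R0 Nm B1 B2 b1 b2"
  by (simp add: rate_M_def algebra_simps)

lemma payoff1_eq_payoff2_swap:
  "payoff1 alpha R0 lamS Nm Nf B1 B2 b1 b2 = payoff2 alpha R0 lamS Nm Nf B2 B1 b2 b1"
  by (simp add: payoff1_def payoff2_def sp_payoff_def rate_S_commute rate_M_commute)

lemma has_real_derivative_payoff1:
  fixes alpha R0 lamS Nm Nf B1 B2 b1 b2 :: real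
  assumes "0 < Nm" "0 < Nf" "0 < R0" "0 < lamS" "0 < b1 + b2" "0 < (B1 - b1) + (B2 - b2)"
  shows "((\<lambda>x. payoff1 alpha R0 lamS Nm Nf B1 B2 x b2) has_real_derivative
     R0 * marginal_revenue alpha (lamS * rate_S R0 lamS Nf b1 b2 powr (- alpha)) (rate_M R0 Nm B1 B2 b1 b2 powr (- alpha))
        (b1 / (b1 + b2)) ((B1 - b1) / ((B1 - b1) + (B2 - b2)))) (at b1)"
  using has_real_derivative_payoff2[of Nm Nf R0 lamS b2 b1 B2 B1 alpha] assms
  by (simp add: payoff1_eq_payoff2_swap rate_S_commute rate_M_commute add.commute)

lemma B_free_less:
  assumes "0 < Nm" "0 < Nf" "0 < Bi"
  shows "B_free alpha lamS Nm Nf Bi < Bi"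
proof -
  have "0 \<le> eps alpha lamS"
    by (simp add: eps_def)
  then have "eps alpha lamS * Nf / (eps alpha lamS * Nf + Nm) < 1"
    using assms by (simp add: add_nonneg_pos)
  then have "eps alpha lamS * Nf / (eps alpha lamS * Nf + Nm) * Bi < 1 * Bi"
    using assms(3) by (rule mult_strict_right_mono)
  then show ?thesis
    by (simp add: B_free_def)
qed

locale constrained_bandwidth_game =
  fixes alpha R0 lamS Nm Nf B1 B2 B10 B20 :: real
  assumes alpha_pos: "0 < alpha" and alpha_less_1: "alpha < 1"
    and Nm_pos: "0 < Nm" and Nf_pos: "0 < Nf" and R0_pos: "0 < R0" and lamS_pos: "0 < lamS"
    and B1_pos: "0 < B1" and B2_pos: "0 < B2"
    and B10_nonneg: "0 \<le> B10" and B20_nonneg: "0 \<le> B20"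
begin

abbreviation NE :: "real \<Rightarrow> real \<Rightarrow> bool" where
  "NE b1 b2 \<equiv> is_NE alpha R0 lamS Nm Nf B1 B2 B10 B20 b1 b2"

definition small_price :: "real \<Rightarrow> real \<Rightarrow> real" where
  "small_price b1 b2 = lamS * rate_S R0 lamS Nf b1 b2 powr (- alpha)"

definition macro_price :: "real \<Rightarrow> real \<Rightarrow> real" where
  "macro_price b1 b2 = rate_M R0 Nm B1 B2 b1 b2 powr (- alpha)"

definition marginal1 :: "real \<Rightarrow> real \<Rightarrow> real" where
  "marginal1 b1 b2 = marginal_revenue alpha (small_price b1 b2) (macro_price b1 b2)
     (b1 / (b1 + b2)) ((B1 - b1) / ((B1 - b1) + (B2 - b2)))"

definition marginal2 :: "real \<Rightarrow> real \<Rightarrow> real" where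
  "marginal2 b1 b2 = marginal_revenue alpha (small_price b1 b2) (macro_price b1 b2)
     (b2 / (b1 + b2)) ((B2 - b2) / ((B1 - b1) + (B2 - b2)))"

lemma marginal1_eq_complement:
  assumes "b1 + b2 \<noteq> 0" "(B1 - b1) + (B2 - b2) \<noteq> 0"
  shows "marginal1 b1 b2 = marginal_revenue alpha (small_price b1 b2) (macro_price b1 b2)
     (1 - b2 / (b1 + b2)) (1 - (B2 - b2) / ((B1 - b1) + (B2 - b2)))"
proof -
  have "b1 / (b1 + b2) = 1 - b2 / (b1 + b2)"
    and "(B1 - b1) / ((B1 - b1) + (B2 - b2)) = 1 - (B2 - b2) / ((B1 - b1) + (B2 - b2))"
    using assms by (simp_all add: field_simps)
  then show ?thesis
    by (simp add: marginal1_def)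
qed

lemma macro_price_pos:
  assumes "0 < (B1 - b1) + (B2 - b2)"
  shows "0 < macro_price b1 b2"
  using assms Nm_pos R0_pos by (simp add: macro_price_def rate_M_def)

lemma NE_first_order_conditions:
  assumes NE: "NE b1 b2" and S: "0 < b1 + b2" and C: "0 < (B1 - b1) + (B2 - b2)"
  shows "B10 < b1 \<Longrightarrow> 0 \<le> marginal1 b1 b2" and "b1 < B1 \<Longrightarrow> marginal1 b1 b2 \<le> 0"
    and "B20 < b2 \<Longrightarrow> 0 \<le> marginal2 b1 b2" and "b2 < B2 \<Longrightarrow> marginal2 b1 b2 \<le> 0"
proof -
  have range: "b1 \<in> {B10..B1}" "b2 \<in> {B20..B2}"
    and best1: "\<forall>x\<in>{B10..B1}. payoff1 alpha R0 lamS Nm Nf B1 B2 x b2 \<le> payoff1 alpha R0 lamS Nm Nf B1 B2 b1 b2"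
    and best2: "\<forall>y\<in>{B20..B2}. payoff2 alpha R0 lamS Nm Nf B1 B2 b1 y \<le> payoff2 alpha R0 lamS Nm Nf B1 B2 b1 b2"
    using NE unfolding is_NE_def by auto
  have d1: "((\<lambda>x. payoff1 alpha R0 lamS Nm Nf B1 B2 x b2) has_real_derivative R0 * marginal1 b1 b2) (at b1)"
    using has_real_derivative_payoff1[OF Nm_pos Nf_pos R0_pos lamS_pos S C]
    by (simp add: marginal1_def small_price_def macro_price_def)
  have d2: "((\<lambda>y. payoff2 alpha R0 lamS Nm Nf B1 B2 b1 y) has_real_derivative R0 * marginal2 b1 b2) (at b2)"
    using has_real_derivative_payoff2[OF Nm_pos Nf_pos R0_pos lamS_pos S C]
    by (simp add: marginal2_def small_price_def macro_price_def)
  show "0 \<le> marginal1 b1 b2" if "B10 < b1"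
    using DERIV_nonneg_if_max_at_right_end[OF d1 that] best1 range R0_pos
    by (auto simp: zero_le_mult_iff)
  show "marginal1 b1 b2 \<le> 0" if "b1 < B1"
    using DERIV_nonpos_if_max_at_left_end[OF d1 that] best1 range R0_pos
    by (auto simp: mult_le_0_iff)
  show "0 \<le> marginal2 b1 b2" if "B20 < b2"
    using DERIV_nonneg_if_max_at_right_end[OF d2 that] best2 range R0_pos
    by (auto simp: zero_le_mult_iff)
  show "marginal2 b1 b2 \<le> 0" if "b2 < B2"
    using DERIV_nonpos_if_max_at_left_end[OF d2 that] best2 range R0_pos
    by (auto simp: mult_le_0_iff)
qed

lemma NE_share_le:
  assumes NE: "NE b1 b2" and S: "0 < b1 + b2" and C: "0 < (B1 - b1) + (B2 - b2)"
    and "B20 < b2" "b1 < B1"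
  shows "b2 * B1 \<le> B2 * b1"
proof -
  have "0 \<le> b2 / (b1 + b2)" "b2 / (b1 + b2) \<le> 1"
    using NE S B10_nonneg B20_nonneg unfolding is_NE_def by auto
  moreover have "0 \<le> marginal2 b1 b2" "marginal1 b1 b2 \<le> 0"
    using NE_first_order_conditions[OF NE S C] assms(4,5) by auto
  ultimately have "b2 / (b1 + b2) \<le> (B2 - b2) / ((B1 - b1) + (B2 - b2))"
    using marginal_revenue_share_le[OF macro_price_pos[OF C] alpha_pos alpha_less_1]
    unfolding marginal2_def marginal1_eq_complement[OF less_imp_neq[OF S, symmetric] less_imp_neq[OF C, symmetric]]
    by blast
  then show ?thesis
    using share_le_iff[OF S C] by simp
qed

lemma NE_share_ge:
  assumes NE: "NE b1 b2" and S: "0 < b1 + b2" and C: "0 < (B1 - b1) + (B2 - b2)"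
    and "B10 < b1" "b2 < B2"
  shows "b1 * B2 \<le> B1 * b2"
proof -
  have "0 \<le> b1 / (b1 + b2)" "b1 / (b1 + b2) \<le> 1"
    using NE S B10_nonneg B20_nonneg unfolding is_NE_def by auto
  moreover have "0 \<le> marginal1 b1 b2" "marginal2 b1 b2 \<le> 0"
    using NE_first_order_conditions[OF NE S C] assms(4,5) by auto
  moreover have "1 - b1 / (b1 + b2) = b2 / (b1 + b2)"
    and "1 - (B1 - b1) / ((B1 - b1) + (B2 - b2)) = (B2 - b2) / ((B1 - b1) + (B2 - b2))"
    using S C by (simp_all add: field_simps)
  ultimately have "b1 / (b1 + b2) \<le> (B1 - b1) / ((B1 - b1) + (B2 - b2))"
    using marginal_revenue_share_le[OF macro_price_pos[OF C] alpha_pos alpha_less_1]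
    unfolding marginal1_def marginal2_def by metis
  then show ?thesis
    using share_le_iff[of b2 b1 B2 B1] S C by (simp add: add.commute)
qed

lemma NE_interior_eq_B_free:
  assumes NE: "NE b1 b2" and "B10 < b1" "b1 < B1" "B20 < b2" "b2 < B2"
  shows "b2 = B_free alpha lamS Nm Nf B2"
proof -
  define S C e where "S = b1 + b2" and "C = (B1 - b1) + (B2 - b2)" and "e = eps alpha lamS"
  have S: "0 < b1 + b2" and C: "0 < (B1 - b1) + (B2 - b2)"
    using assms(2-5) B10_nonneg B20_nonneg by auto
  have "marginal2 b1 b2 = 0" "marginal1 b1 b2 = 0"
    using NE_first_order_conditions[OF NE S C] assms(2-5) by (auto intro: antisym)
  then have "marginal_revenue alpha (small_price b1 b2) (macro_price b1 b2) (b2 / S) ((B2 - b2) / C) = 0"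
    and "marginal_revenue alpha (small_price b1 b2) (macro_price b1 b2) (1 - b2 / S) (1 - (B2 - b2) / C) = 0"
    using marginal1_eq_complement S C unfolding marginal2_def S_def C_def by auto
  from marginal_revenue_both_zero[OF _ _ _ this] macro_price_pos[OF C] alpha_pos alpha_less_1
  have prices: "small_price b1 b2 = macro_price b1 b2" and shares: "b2 / S = (B2 - b2) / C"
    by auto
  have "rate_S R0 lamS Nf b1 b2 = lamS powr (1 / alpha) * rate_M R0 Nm B1 B2 b1 b2"
    using mult_powr_neg_eqD[OF lamS_pos _ _ _ prices[unfolded small_price_def macro_price_def]]
      S C Nm_pos Nf_pos R0_pos lamS_pos alpha_pos
    by (simp add: rate_S_def rate_M_def)
  moreover have "lamS powr (1 / alpha) = lamS * e"
    using lamS_pos by (simp add: e_def eps_def powr_diff)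
  ultimately have "lamS * R0 * (S * Nm) = lamS * R0 * (e * Nf * C)"
    using Nm_pos Nf_pos by (simp add: rate_S_def rate_M_def S_def C_def field_simps)
  then have rates: "S * Nm = e * Nf * C"
    using R0_pos lamS_pos by simp
  have "b2 * (e * Nf + Nm) * S = e * Nf * (b2 * S + b2 * C)"
    using rates by (simp add: algebra_simps)
  also have "\<dots> = e * Nf * B2 * S"
  proof -
    have "b2 * C = (B2 - b2) * S"
      using shares S C unfolding S_def C_def by (simp add: frac_eq_eq)
    then show ?thesis
      by (simp add: algebra_simps)
  qed
  finally have "b2 * (e * Nf + Nm) = e * Nf * B2"
    using S by (simp add: S_def)
  moreover have "0 < e * Nf + Nm"
    using Nm_pos Nf_pos by (simp add: e_def eps_def add_nonneg_pos)
  ultimately show ?thesis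
    by (simp add: B_free_def e_def eq_divide_eq)
qed

text \<open>When SP 2 has no macro-cell bandwidth left, a small amount t of it earns of order
  t powr (1 - alpha), while the small-cell revenue lost is only linear in t.\<close>
lemma payoff2_not_max_at_full_small_cell_use:
  assumes "0 \<le> a" "a < B2"
  shows "\<exists>y\<in>{a..B2}. payoff2 alpha R0 lamS Nm Nf B1 B2 B1 B2 < payoff2 alpha R0 lamS Nm Nf B1 B2 B1 y"
proof -
  define r where "r y = lamS * (B1 + y) * R0 / Nf" for y
  define K where "K = lamS * r 0 powr (- alpha)"
  define c where "c = Nm / R0 * K powr (-1 / alpha)"
  define t where "t = min (B2 - a) c / 2"
  define y where "y = B2 - t"
  have r0: "0 < r 0"
    using lamS_pos B1_pos R0_pos Nf_pos by (simp add: r_def)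
  then have K: "0 < K"
    using lamS_pos by (simp add: K_def)
  then have "0 < c"
    using Nm_pos R0_pos by (simp add: c_def)
  then have t: "0 < t" "t \<le> B2 - a" "t < c"
    using assms by (auto simp: t_def)
  then have small: "t * R0 / Nm < K powr (-1 / alpha)"
    using Nm_pos R0_pos by (simp add: c_def field_simps)
  have y: "y \<in> {a..B2}" "0 \<le> y"
    using assms t by (auto simp: y_def)
  have payoff: "payoff2 alpha R0 lamS Nm Nf B1 B2 B1 z
      = R0 * ((B2 - z) * ((B2 - z) * R0 / Nm) powr (- alpha)) + R0 * lamS * (z * r z powr (- alpha))" for z
    by (simp add: payoff2_def sp_payoff_def rev_term_def rate_M_def rate_S_def r_def)
  have "r 0 \<le> r y" "r y \<le> r B2"
    using y lamS_pos R0_pos Nf_pos by (auto simp: r_def divide_right_mono)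
  then have "r B2 powr (- alpha) \<le> r y powr (- alpha)" "r y powr (- alpha) \<le> r 0 powr (- alpha)"
    using r0 alpha_pos by (auto intro: powr_mono2')
  then have "B2 * r B2 powr (- alpha) \<le> B2 * r y powr (- alpha)"
    and "t * r y powr (- alpha) \<le> t * r 0 powr (- alpha)"
    using B2_pos t(1) by (simp_all add: mult_left_mono)
  then have loss: "B2 * r B2 powr (- alpha) - y * r y powr (- alpha) \<le> t * r 0 powr (- alpha)"
    by (simp add: y_def algebra_simps)
  have gain: "K < (t * R0 / Nm) powr (- alpha)"
    using powr_neg_gt_if_lt_powr[OF K alpha_pos _ small] t(1) R0_pos Nm_pos by simp
  have "R0 * t * ((t * R0 / Nm) powr (- alpha) - K)
      \<le> R0 * (t * (t * R0 / Nm) powr (- alpha)) - R0 * lamS * (B2 * r B2 powr (- alpha) - y * r y powr (- alpha))"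
    using mult_left_mono[OF loss, of "R0 * lamS"] R0_pos lamS_pos by (simp add: K_def algebra_simps)
  also have "\<dots> = payoff2 alpha R0 lamS Nm Nf B1 B2 B1 y - payoff2 alpha R0 lamS Nm Nf B1 B2 B1 B2"
    unfolding payoff by (simp add: y_def algebra_simps)
  finally show ?thesis
    using gain t(1) R0_pos y(1) by (smt (verit) mult_pos_pos)
qed

lemma NE_macro_bandwidth_pos:
  assumes NE: "NE b1 b2" and "B20 < B2"
  shows "0 < (B1 - b1) + (B2 - b2)"
proof (rule ccontr)
  assume "\<not> 0 < (B1 - b1) + (B2 - b2)"
  with NE have "b1 = B1" "b2 = B2"
    unfolding is_NE_def by auto
  with NE show False
    using payoff2_not_max_at_full_small_cell_use[OF B20_nonneg assms(2)]
    unfolding is_NE_def by fastforce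
qed

lemma NE_less_B1_if_above_B20:
  assumes NE: "NE b1 b2" and "B20 < b2" and "B10 \<le> B_free alpha lamS Nm Nf B1"
  shows "b1 < B1"
proof (rule ccontr)
  assume "\<not> b1 < B1"
  moreover have "b2 \<le> B2" "b1 \<le> B1"
    using NE unfolding is_NE_def by auto
  moreover have "0 < (B1 - b1) + (B2 - b2)"
    using NE_macro_bandwidth_pos[OF NE] assms(2) \<open>b2 \<le> B2\<close> by simp
  ultimately have "b1 = B1" "b2 < B2"
    by auto
  moreover have "B10 < b1"
    using \<open>b1 = B1\<close> assms(3) B_free_less[OF Nm_pos Nf_pos B1_pos, of alpha lamS] by simp
  ultimately have "B1 * B2 \<le> B1 * b2"
    using NE_share_ge[OF NE _ \<open>0 < (B1 - b1) + (B2 - b2)\<close>] assms(2) B20_nonneg B1_pos by simp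
  then show False
    using \<open>b2 < B2\<close> B1_pos by simp
qed

lemma NE_le_B_free_if_above_B20:
  assumes NE: "NE b1 b2" and b2: "B20 < b2" and "B10 \<le> B_free alpha lamS Nm Nf B1"
  shows "b2 \<le> B_free alpha lamS Nm Nf B2"
proof (rule ccontr)
  assume above: "\<not> b2 \<le> B_free alpha lamS Nm Nf B2"
  have "b1 < B1"
    using NE_less_B1_if_above_B20[OF NE b2 assms(3)] .
  moreover have "B10 \<le> b1" "b2 \<le> B2"
    using NE unfolding is_NE_def by auto
  ultimately have S: "0 < b1 + b2" and C: "0 < (B1 - b1) + (B2 - b2)"
    using b2 B10_nonneg B20_nonneg by auto
  have share: "b2 * B1 \<le> B2 * b1"
    using NE_share_le[OF NE S C b2 \<open>b1 < B1\<close>] .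
  have "B2 * B_free alpha lamS Nm Nf B1 = B_free alpha lamS Nm Nf B2 * B1"
    by (simp add: B_free_def)
  also have "\<dots> < b2 * B1"
    using above B1_pos by simp
  finally have "B10 < b1"
    using share assms(3) B2_pos by (smt (verit) mult_le_cancel_left_pos)
  moreover have "b2 < B2"
    using share \<open>b1 < B1\<close> B1_pos B2_pos by (smt (verit) mult_less_cancel_left_pos mult.commute)
  ultimately have "b2 = B_free alpha lamS Nm Nf B2"
    using NE_interior_eq_B_free[OF NE _ \<open>b1 < B1\<close> b2] by blast
  with above show False
    by simp
qed

end

theorem proposition2:
  fixes alpha R0 lamS Nm Nf B1 B2 B10 B20 b1 b2 :: real
  assumes "0 < alpha" "alpha < 1" "0 < Nm" "0 < Nf" "0 < R0" "1 < lamS"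
    and "0 < B1" "0 < B2"
    and "0 \<le> B10" "B10 \<le> B1" "0 \<le> B20" "B20 \<le> B2"
    and "B_free alpha lamS Nm Nf B1 \<ge> B10"
    and "B_free alpha lamS Nm Nf B2 < B20"
    and "is_NE alpha R0 lamS Nm Nf B1 B2 B10 B20 b1 b2"
  shows "b2 = B20 \<and> (b1 = B10 \<or> b1 > B10)"
proof -
  interpret constrained_bandwidth_game alpha R0 lamS Nm Nf B1 B2 B10 B20
    using assms(1-9,11) by unfold_locales auto
  have range: "B10 \<le> b1" "B20 \<le> b2"
    using assms(15) unfolding is_NE_def by auto
  have "b2 = B20"
  proof (rule ccontr)
    assume "b2 \<noteq> B20"
    with range have "B20 < b2"
      by simp
    then have "b2 \<le> B_free alpha lamS Nm Nf B2"
      using NE_le_B_free_if_above_B20 assms(13,15) by blast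
    with assms(14) \<open>B20 < b2\<close> show False
      by simp
  qed
  with range show ?thesis
    by auto
qed

end
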